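(* Let $R>0$, $h>0$ and $\lambda>0$, and let $G_1,G_2$ be independent exponential random variables with rate $\lambda$ (representing $g_1^2,g_2^2$). For $\Delta>0$ let $$\alpha_1(\Delta)=2^R-\frac{h^2}{1+\Delta}-1,\qquad \alpha_2(\Delta)=2^R\frac{1+\Delta}{\Delta}-1,$$ and $Q(\Delta)=\Pr\{G_2\ge[\alpha_1(\Delta)]^+,\ G_1+G_2\ge\alpha_2(\Delta)\}$, where $[x]^+=\max\{x,0\}$. Let $\Delta_t=\frac{h^2}{2^R-1}-1$. Then the cubic equation $$\frac{h^2}{\lambda}\Delta^3-2^R(2^R+h^2)\Delta^2-2^R(2^{R+1}+h^2)\Delta-2^{2R}=0$$ has exactly one positive root $\Delta^\dagger$, and $\Delta^*=\max\{\Delta^\dagger,\Delta_t\}$ maximizes $Q(\Delta)$ over $\Delta>0$.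
   Context: This is the full-duplex Gaussian single-relay channel ($Y_r=\mathsf hX+Z_r$, $Y=\mathsf g_1X_r+\mathsf g_2X+Z$, unit powers and noise) under Rayleigh fading with $|\mathsf g_1|^2,|\mathsf g_2|^2$ i.i.d. exponential with rate $\lambda$, where the relay knows only the realization of its incoming channel $h=|\mathsf h|$. With Gaussian quantization distortion $\Delta$, the quantize-map-and-forward rate is $\big[\min\{\log_2(1+\frac{h^2}{1+\Delta}+g_2^2),\ \log_2(1+g_1^2+g_2^2)-\log_2\frac{1+\Delta}{\Delta}\}\big]^+$, and $Q(\Delta)$ equals one minus the outage probability at rate $R$ conditioned on $h$; so $\Delta^*$ is the outage-optimal quantizer given receiver CSI. *)

theory Defs
  imports "HOL-Probability.Probability"
begin

definition alpha1 :: "real \<Rightarrow> real \<Rightarrow> real \<Rightarrow> real" where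
  "alpha1 R h \<Delta> = 2 powr R - h\<^sup>2 / (1 + \<Delta>) - 1"

definition alpha2 :: "real \<Rightarrow> real \<Rightarrow> real" where
  "alpha2 R \<Delta> = 2 powr R * ((1 + \<Delta>) / \<Delta>) - 1"

definition Qprob :: "'a measure \<Rightarrow> ('a \<Rightarrow> real) \<Rightarrow> ('a \<Rightarrow> real) \<Rightarrow> real \<Rightarrow> real \<Rightarrow> real \<Rightarrow> real" where
  "Qprob M G1 G2 R h \<Delta> =
     measure M {\<omega> \<in> space M. G2 \<omega> \<ge> max (alpha1 R h \<Delta>) 0 \<and> G1 \<omega> + G2 \<omega> \<ge> alpha2 R \<Delta>}"

definition delta_t :: "real \<Rightarrow> real \<Rightarrow> real" where
  "delta_t R h = h\<^sup>2 / (2 powr R - 1) - 1"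

definition cubic :: "real \<Rightarrow> real \<Rightarrow> real \<Rightarrow> real \<Rightarrow> real" where
  "cubic R h lam \<Delta> = h\<^sup>2 / lam * \<Delta> ^ 3 - 2 powr R * (2 powr R + h\<^sup>2) * \<Delta>\<^sup>2
      - 2 powr R * (2 powr (R + 1) + h\<^sup>2) * \<Delta> - 2 powr (2 * R)"

end

theory Submission
  imports Defs
begin

text \<open>
  Write \<open>s = 2\<^sup>R\<close> and \<open>H = h\<^sup>2\<close>. For independent exponentials and \<open>0 \<le> a \<le> b\<close> one has
  \<open>P{G\<^sub>2 \<ge> a, G\<^sub>1 + G\<^sub>2 \<ge> b} = e\<^sup>-\<^sup>\<lambda>\<^sup>b (1 + \<lambda>(b - a))\<close>, so \<open>Q\<close> is explicit.
  For \<open>\<Delta> \<le> \<Delta>\<^sub>t\<close> the threshold \<open>[\<alpha>\<^sub>1]\<^sup>+\<close> vanishes and \<open>Q\<close> is the Erlang tail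
  \<open>(1 + \<lambda>b) e\<^sup>-\<^sup>\<lambda>\<^sup>b\<close> at \<open>b = \<alpha>\<^sub>2(\<Delta>)\<close>, which grows with \<open>\<Delta>\<close>; so nothing below \<open>\<Delta>\<^sub>t\<close> beats \<open>\<Delta>\<^sub>t\<close>.
  For \<open>\<Delta> \<ge> \<Delta>\<^sub>t\<close> the derivative of \<open>Q\<close> has the sign of minus the cubic. In the variable
  \<open>u = 1/\<Delta>\<close> the cubic becomes \<open>\<Delta>\<^sup>3\<close> times a polynomial with positive constant term and
  negative other coefficients, hence strictly decreasing in \<open>u\<close>: the cubic has a single
  positive root \<open>\<Delta>\<^sup>\<dagger>\<close> and \<open>Q\<close> is unimodal on \<open>[\<Delta>\<^sub>t, \<infinity>)\<close> with peak at \<open>\<Delta>\<^sup>\<dagger>\<close>.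
\<close>

abbreviation exponential_measure :: "real \<Rightarrow> real measure" where
  "exponential_measure l \<equiv> density lborel (\<lambda>x. ennreal (exponential_density l x))"

lemma emeasure_exponential_greaterThan:
  assumes l: "0 < l" and c: "0 \<le> c"
  shows "emeasure (exponential_measure l) {c<..} = ennreal (exp (- l * c))"
proof -
  interpret prob_space "exponential_measure l" using prob_space_exponential_density[OF l] .
  have "{c<..} = space (exponential_measure l) - {..c}" by auto
  then have "emeasure (exponential_measure l) {c<..} = 1 - emeasure (exponential_measure l) {..c}"
    using emeasure_compl[of "{..c}" "exponential_measure l"] emeasure_space_1 by simp
  also have "\<dots> = 1 - ennreal (1 - exp (- l * c))"
    using emeasure_erlang_density[OF l, of 0 c] c by (simp add: erlang_CDF_def)
  also have "\<dots> = ennreal (exp (- l * c))"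
    using l c by (simp add: ennreal_1[symmetric] ennreal_minus del: ennreal_1)
  finally show ?thesis .
qed

lemma emeasure_exponential_atLeast:
  assumes l: "0 < l" and c: "0 \<le> c"
  shows "emeasure (exponential_measure l) {c..} = ennreal (exp (- l * c))"
proof -
  have "emeasure (exponential_measure l) {c..}
      = (\<integral>\<^sup>+x. ennreal (exponential_density l x) * indicator {c..} x \<partial>lborel)"
    by (simp add: emeasure_density)
  also have "\<dots> = (\<integral>\<^sup>+x. ennreal (exponential_density l x) * indicator {c<..} x \<partial>lborel)"
    by (rule nn_integral_cong_AE)
      (use AE_lborel_singleton[of c] in \<open>auto elim!: eventually_mono split: split_indicator\<close>)
  also have "\<dots> = emeasure (exponential_measure l) {c<..}"
    by (simp add: emeasure_density)
  finally show ?thesis using emeasure_exponential_greaterThan[OF l c] by simp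
qed

lemma exponential_density_mult_tail:
  assumes l: "0 < l" and a: "0 \<le> a" and ab: "a \<le> b"
  shows "ennreal (exponential_density l x) * ennreal (exp (- l * max a (b - x)))
    = ennreal (l * exp (- l * b)) * indicator {0..b - a} x
      + ennreal (exp (- l * a)) * (ennreal (exponential_density l x) * indicator {b - a<..} x)"
proof -
  consider "x < 0" | "0 \<le> x" "x \<le> b - a" | "b - a < x" by linarith
  then show ?thesis
  proof cases
    case 1
    then show ?thesis using ab by (simp add: exponential_density_def indicator_def)
  next
    case 2
    have "exp (- x * l) * exp (- l * (b - x)) = exp (- l * b)"
      by (simp add: exp_add[symmetric] algebra_simps)
    with 2 l show ?thesis
      by (simp add: exponential_density_def indicator_def ennreal_mult'[symmetric] mult.assoc)
  next
    case 3
    with a l show ?thesis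
      by (simp add: exponential_density_def indicator_def ennreal_mult'[symmetric] mult.commute)
  qed
qed

text \<open>Conditioning on \<open>G\<^sub>1 = x\<close> leaves the exponential tail of \<open>G\<^sub>2\<close> at \<open>max a (b - x)\<close>.\<close>

lemma emeasure_exponential_pair_tail:
  assumes l: "0 < l" and a: "0 \<le> a" and ab: "a \<le> b"
  shows "emeasure (exponential_measure l \<Otimes>\<^sub>M exponential_measure l)
           {p. a \<le> snd p \<and> b \<le> fst p + snd p}
         = ennreal (exp (- l * b) * (1 + l * (b - a)))"
    (is "emeasure (?E \<Otimes>\<^sub>M ?E) ?A = _")
proof -
  interpret E: prob_space ?E using prob_space_exponential_density[OF l] .
  have "?A = {p \<in> space (borel \<Otimes>\<^sub>M borel). a \<le> snd p \<and> b \<le> fst p + snd p}"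
    by (auto simp: space_pair_measure)
  also have "\<dots> \<in> sets (borel \<Otimes>\<^sub>M borel)" by measurable
  finally have A: "?A \<in> sets (?E \<Otimes>\<^sub>M ?E)" by simp
  have "emeasure (?E \<Otimes>\<^sub>M ?E) ?A = (\<integral>\<^sup>+x. emeasure ?E (Pair x -` ?A) \<partial>?E)"
    by (rule E.emeasure_pair_measure_alt) (use A in simp)
  also have "\<dots> = (\<integral>\<^sup>+x. ennreal (exp (- l * max a (b - x))) \<partial>?E)"
  proof (rule nn_integral_cong)
    fix x
    have "Pair x -` ?A = {max a (b - x)..}" by auto
    then show "emeasure ?E (Pair x -` ?A) = ennreal (exp (- l * max a (b - x)))"
      using emeasure_exponential_atLeast[OF l, of "max a (b - x)"] a by simp
  qed
  also have "\<dots> = (\<integral>\<^sup>+x. ennreal (exponential_density l x) * ennreal (exp (- l * max a (b - x))) \<partial>lborel)"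
    by (rule nn_integral_density) simp_all
  also have "\<dots> = ennreal (l * exp (- l * b)) * (\<integral>\<^sup>+x. indicator {0..b - a} x \<partial>lborel)
      + ennreal (exp (- l * a)) * (\<integral>\<^sup>+x. ennreal (exponential_density l x) * indicator {b - a<..} x \<partial>lborel)"
    unfolding exponential_density_mult_tail[OF l a ab] by (simp add: nn_integral_add nn_integral_cmult)
  also have "\<dots> = ennreal (l * exp (- l * b)) * ennreal (b - a)
      + ennreal (exp (- l * a)) * ennreal (exp (- l * (b - a)))"
    using emeasure_exponential_greaterThan[OF l, of "b - a"] ab by (simp add: emeasure_density)
  also have "\<dots> = ennreal (exp (- l * b) * (1 + l * (b - a)))"
    using ab l by (simp add: ennreal_mult'[symmetric] ennreal_plus[symmetric] exp_add[symmetric]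
        algebra_simps del: ennreal_plus)
  finally show ?thesis .
qed

locale indep_exponential_pair = prob_space M
  for M :: "'a measure" and G1 G2 :: "'a \<Rightarrow> real" and l :: real +
  assumes rate_pos: "0 < l"
    and distributed_G1: "distributed M lborel G1 (exponential_density l)"
    and distributed_G2: "distributed M lborel G2 (exponential_density l)"
    and indep_G1_G2: "indep_var borel G1 borel G2"
begin

lemma distr_pair_eq_exponential_pair:
  "distr M (borel \<Otimes>\<^sub>M borel) (\<lambda>\<omega>. (G1 \<omega>, G2 \<omega>)) = exponential_measure l \<Otimes>\<^sub>M exponential_measure l"
proof -
  have "distr M borel G = exponential_measure l"
    if "distributed M lborel G (exponential_density l)" for G
    using distributed_distr_eq_density[OF that] by (metis distr_cong sets_lborel)
  then show ?thesis
    using indep_G1_G2 distributed_G1 distributed_G2 unfolding indep_var_distribution_eq by simp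
qed

lemma prob_G2_ge_and_sum_ge:
  assumes a: "0 \<le> a" and ab: "a \<le> b"
  shows "measure M {\<omega> \<in> space M. a \<le> G2 \<omega> \<and> b \<le> G1 \<omega> + G2 \<omega>} = exp (- l * b) * (1 + l * (b - a))"
proof -
  have [measurable]: "G1 \<in> borel_measurable M" "G2 \<in> borel_measurable M"
    using distributed_measurable[OF distributed_G1] distributed_measurable[OF distributed_G2] by simp_all
  let ?A = "{p :: real \<times> real. a \<le> snd p \<and> b \<le> fst p + snd p}"
  have "?A = {p \<in> space (borel \<Otimes>\<^sub>M borel). a \<le> snd p \<and> b \<le> fst p + snd p}"
    by (auto simp: space_pair_measure)
  also have "\<dots> \<in> sets (borel \<Otimes>\<^sub>M borel)" by measurable
  finally have A: "?A \<in> sets (borel \<Otimes>\<^sub>M borel)" .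
  have "emeasure M {\<omega> \<in> space M. a \<le> G2 \<omega> \<and> b \<le> G1 \<omega> + G2 \<omega>}
      = emeasure (distr M (borel \<Otimes>\<^sub>M borel) (\<lambda>\<omega>. (G1 \<omega>, G2 \<omega>))) ?A"
    by (subst emeasure_distr) (use A in \<open>auto intro!: arg_cong[where f="emeasure M"]\<close>)
  also have "\<dots> = ennreal (exp (- l * b) * (1 + l * (b - a)))"
    unfolding distr_pair_eq_exponential_pair by (rule emeasure_exponential_pair_tail[OF rate_pos a ab])
  finally show ?thesis
    by (rule measure_eq_emeasure_eq_ennreal[rotated]) (use ab rate_pos in simp)
qed

end

definition optimal_cubic :: "real \<Rightarrow> real \<Rightarrow> real \<Rightarrow> real \<Rightarrow> real" where
  "optimal_cubic s H l x = H / l * x ^ 3 - s * (s + H) * x\<^sup>2 - s * (2 * s + H) * x - s\<^sup>2"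

definition reversed_cubic :: "real \<Rightarrow> real \<Rightarrow> real \<Rightarrow> real \<Rightarrow> real" where
  "reversed_cubic s H l u = H / l - s * (s + H) * u - s * (2 * s + H) * u\<^sup>2 - s\<^sup>2 * u ^ 3"

lemma cubic_eq_optimal_cubic: "cubic R h l = optimal_cubic (2 powr R) (h\<^sup>2) l"
proof -
  have "2 powr (R + 1) = 2 * 2 powr R" by (simp add: powr_add)
  moreover have "2 powr (2 * R) = (2 powr R)\<^sup>2"
    by (simp add: power2_eq_square flip: powr_add)
  ultimately show ?thesis
    by (simp add: fun_eq_iff cubic_def optimal_cubic_def algebra_simps)
qed

lemma optimal_cubic_eq_reversed:
  "0 < x \<Longrightarrow> optimal_cubic s H l x = x ^ 3 * reversed_cubic s H l (1 / x)"
  by (simp add: optimal_cubic_def reversed_cubic_def field_simps power2_eq_square power3_eq_cube)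

lemma reversed_cubic_strict_antimono:
  assumes "0 < v" "v < u" "0 < s" "0 < H"
  shows "reversed_cubic s H l u < reversed_cubic s H l v"
proof -
  have "v\<^sup>2 < u\<^sup>2" "v ^ 3 < u ^ 3" using assms by (simp_all add: power_strict_mono)
  moreover have "s * (s + H) * v < s * (s + H) * u" using assms by simp
  moreover have "s * (2 * s + H) * v\<^sup>2 \<le> s * (2 * s + H) * u\<^sup>2" "s\<^sup>2 * v ^ 3 \<le> s\<^sup>2 * u ^ 3"
    using assms calculation(1,2) by simp_all
  ultimately show ?thesis unfolding reversed_cubic_def by linarith
qed

lemma optimal_cubic_sign:
  assumes s: "0 < s" and H: "0 < H" and d: "0 < d" "optimal_cubic s H l d = 0"
  shows "0 < x \<Longrightarrow> x < d \<Longrightarrow> optimal_cubic s H l x < 0"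
    and "d < x \<Longrightarrow> 0 < optimal_cubic s H l x"
proof -
  have root: "reversed_cubic s H l (1 / d) = 0"
    using optimal_cubic_eq_reversed[OF d(1), of s H l] d by simp
  show "optimal_cubic s H l x < 0" if "0 < x" "x < d"
  proof -
    have "reversed_cubic s H l (1 / x) < 0"
      using reversed_cubic_strict_antimono[of "1 / d" "1 / x" s H l] root that s H d
      by (simp add: frac_less2)
    then show ?thesis using optimal_cubic_eq_reversed[OF that(1)] that by (simp add: mult_pos_neg)
  qed
  show "0 < optimal_cubic s H l x" if "d < x"
  proof -
    have x: "0 < x" using that d by simp
    have "0 < reversed_cubic s H l (1 / x)"
      using reversed_cubic_strict_antimono[of "1 / x" "1 / d" s H l] root that s H d x
      by (simp add: frac_less2)
    then show ?thesis using optimal_cubic_eq_reversed[OF x] x by simp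
  qed
qed

text \<open>\<open>X\<close> is chosen with \<open>X H / l > T\<close> and \<open>X \<ge> 1\<close>; then the cubic term beats all others together.\<close>

lemma optimal_cubic_has_positive_root:
  assumes s: "0 < s" and H: "0 < H" and l: "0 < l"
  shows "\<exists>d>0. optimal_cubic s H l d = 0"
proof -
  define T where "T = 4 * s\<^sup>2 + 2 * s * H"
  define X where "X = 1 + 2 * T * l / H"
  have T: "0 < T" using s H unfolding T_def by (simp add: add_pos_pos)
  have X1: "1 \<le> X" using T l H by (simp add: X_def)
  have "X * H / l = H / l + 2 * T" using l H by (simp add: X_def field_simps)
  then have XT: "T < X * H / l" using H l T by (simp add: add_pos_pos)
  have "s * (s + H) * X\<^sup>2 + s * (2 * s + H) * X + s\<^sup>2 \<le> T * X\<^sup>2"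
  proof -
    have "X \<le> X\<^sup>2" using X1 by (simp add: power2_eq_square)
    moreover have "1 \<le> X\<^sup>2" using X1 by (simp add: one_le_power)
    ultimately have "s * (2 * s + H) * X \<le> s * (2 * s + H) * X\<^sup>2" "s\<^sup>2 \<le> s\<^sup>2 * X\<^sup>2"
      using s H by simp_all
    then show ?thesis unfolding T_def by (simp add: algebra_simps power2_eq_square)
  qed
  moreover have "T * X\<^sup>2 < H / l * X ^ 3"
    using mult_strict_right_mono[OF XT, of "X\<^sup>2"] X1
    by (simp add: power2_eq_square power3_eq_cube field_simps)
  ultimately have pos: "0 < optimal_cubic s H l X" unfolding optimal_cubic_def by linarith
  have neg: "optimal_cubic s H l 0 < 0" using s by (simp add: optimal_cubic_def)
  have "continuous_on {0..X} (optimal_cubic s H l)"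
    unfolding optimal_cubic_def by (intro continuous_intros)
  then obtain d where "0 \<le> d" "d \<le> X" "optimal_cubic s H l d = 0"
    using IVT'[of "optimal_cubic s H l" 0 0 X] pos neg X1 by auto
  moreover have "d \<noteq> 0" using neg calculation by auto
  ultimately show ?thesis by (intro exI[of _ d]) auto
qed

lemma optimal_cubic_unique_positive_root:
  assumes s: "0 < s" and H: "0 < H" and l: "0 < l"
  shows "\<exists>!d. 0 < d \<and> optimal_cubic s H l d = 0"
proof (rule ex_ex1I)
  show "\<exists>d. 0 < d \<and> optimal_cubic s H l d = 0"
    using optimal_cubic_has_positive_root[OF s H l] by auto
next
  fix d1 d2
  assume "0 < d1 \<and> optimal_cubic s H l d1 = 0" "0 < d2 \<and> optimal_cubic s H l d2 = 0"
  then show "d1 = d2"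
    using optimal_cubic_sign(1)[OF s H, of d1 l d2] optimal_cubic_sign(1)[OF s H, of d2 l d1]
    by (metis less_irrefl linorder_neqE_linordered_idom)
qed

text \<open>\<open>Q\<close> on \<open>\<Delta> \<ge> \<Delta>\<^sub>t\<close>, where \<open>\<alpha>\<^sub>2 - \<alpha>\<^sub>1 = s/\<Delta> + H/(1 + \<Delta>)\<close>.\<close>

definition Q_upper :: "real \<Rightarrow> real \<Rightarrow> real \<Rightarrow> real \<Rightarrow> real" where
  "Q_upper s H l x = exp (- l * (s - 1 + s / x)) * (1 + l * (s / x + H / (1 + x)))"

lemma Q_upper_has_real_derivative:
  assumes x: "0 < x" and l: "0 < l"
  shows "(Q_upper s H l has_real_derivative
     - exp (- l * (s - 1 + s / x)) * l\<^sup>2 * optimal_cubic s H l x / (x ^ 3 * (1 + x)\<^sup>2)) (at x)"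
proof -
  have "x \<noteq> 0" "1 + x \<noteq> 0" "l \<noteq> 0" using x l by auto
  then show ?thesis
    unfolding Q_upper_def[abs_def]
    apply (intro derivative_eq_intros refl)
      apply simp_all
    apply (simp add: optimal_cubic_def divide_simps)
    apply (simp add: algebra_simps power2_eq_square power3_eq_cube)
    done
qed

lemma Q_upper_mono_below_root:
  assumes l: "0 < l" and s: "0 < s" and H: "0 < H" and d: "0 < d" "optimal_cubic s H l d = 0"
    and xy: "0 < x" "x \<le> y" "y \<le> d"
  shows "Q_upper s H l x \<le> Q_upper s H l y"
proof (rule deriv_nonneg_imp_mono[OF _ _ xy(2)])
  fix t assume t: "t \<in> {x..y}"
  then have t0: "0 < t" using xy by auto
  show "(Q_upper s H l has_real_derivative
     - exp (- l * (s - 1 + s / t)) * l\<^sup>2 * optimal_cubic s H l t / (t ^ 3 * (1 + t)\<^sup>2)) (at t)"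
    by (rule Q_upper_has_real_derivative[OF t0 l])
  have "optimal_cubic s H l t \<le> 0"
  proof (cases "t = d")
    case False
    then have "t < d" using t xy by auto
    then show ?thesis using optimal_cubic_sign(1)[OF s H d t0] by simp
  qed (use d in simp)
  then show "0 \<le> - exp (- l * (s - 1 + s / t)) * l\<^sup>2 * optimal_cubic s H l t / (t ^ 3 * (1 + t)\<^sup>2)"
    using t0 by (intro divide_nonneg_pos) (simp_all add: mult_nonneg_nonpos)
qed

lemma Q_upper_antimono_above_root:
  assumes l: "0 < l" and s: "0 < s" and H: "0 < H" and d: "0 < d" "optimal_cubic s H l d = 0"
    and xy: "d \<le> x" "x \<le> y"
  shows "Q_upper s H l y \<le> Q_upper s H l x"
proof (rule deriv_nonpos_imp_antimono[OF _ _ xy(2)])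
  fix t assume t: "t \<in> {x..y}"
  then have t0: "0 < t" using xy d by auto
  show "(Q_upper s H l has_real_derivative
     - exp (- l * (s - 1 + s / t)) * l\<^sup>2 * optimal_cubic s H l t / (t ^ 3 * (1 + t)\<^sup>2)) (at t)"
    by (rule Q_upper_has_real_derivative[OF t0 l])
  have "0 \<le> optimal_cubic s H l t"
  proof (cases "t = d")
    case False
    then have "d < t" using t xy by auto
    then show ?thesis using optimal_cubic_sign(2)[OF s H d] by (simp add: less_imp_le)
  qed (use d in simp)
  then show "- exp (- l * (s - 1 + s / t)) * l\<^sup>2 * optimal_cubic s H l t / (t ^ 3 * (1 + t)\<^sup>2) \<le> 0"
    using t0 by (intro divide_nonpos_pos) simp_all
qed

lemma Q_upper_le_at_max_root:
  assumes l: "0 < l" and s: "0 < s" and H: "0 < H" and d: "0 < d" "optimal_cubic s H l d = 0"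
    and x: "0 < x" "t \<le> x"
  shows "Q_upper s H l x \<le> Q_upper s H l (max d t)"
proof (cases "t \<le> d")
  case True
  then show ?thesis
    using Q_upper_mono_below_root[OF l s H d x(1), of d] Q_upper_antimono_above_root[OF l s H d, of d x]
    by (cases "x \<le> d") auto
next
  case False
  then show ?thesis using Q_upper_antimono_above_root[OF l s H d, of t x] x by simp
qed

definition erlang2_tail :: "real \<Rightarrow> real \<Rightarrow> real" where
  "erlang2_tail l b = exp (- l * b) * (1 + l * b)"

lemma erlang2_tail_antimono:
  assumes l: "0 < l" and b: "0 \<le> b1" "b1 \<le> b2"
  shows "erlang2_tail l b2 \<le> erlang2_tail l b1"
proof (rule deriv_nonpos_imp_antimono[OF _ _ b(2)])
  fix t assume t: "t \<in> {b1..b2}"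
  show "(erlang2_tail l has_real_derivative - l\<^sup>2 * t * exp (- l * t)) (at t)"
    unfolding erlang2_tail_def[abs_def]
    by (rule derivative_eq_intros refl | simp add: algebra_simps power2_eq_square)+
  show "- l\<^sup>2 * t * exp (- l * t) \<le> 0" using t b l by simp
qed

lemma alpha2_eq: "0 < x \<Longrightarrow> alpha2 R x = 2 powr R - 1 + 2 powr R / x"
  by (simp add: alpha2_def field_simps)

context indep_exponential_pair
begin

lemma Qprob_eq:
  assumes R: "0 \<le> R" and x: "0 < x"
  shows "Qprob M G1 G2 R h x = exp (- l * alpha2 R x) * (1 + l * (alpha2 R x - max (alpha1 R h x) 0))"
proof -
  have s: "1 \<le> (2::real) powr R" using R by (simp add: ge_one_powr_ge_zero)
  have "alpha1 R h x \<le> 2 powr R - 1" using x by (simp add: alpha1_def)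
  moreover have "0 < 2 powr R / x" using x by simp
  ultimately have "max (alpha1 R h x) 0 \<le> alpha2 R x" using s alpha2_eq[OF x] by auto
  then show ?thesis unfolding Qprob_def by (intro prob_G2_ge_and_sum_ge) simp_all
qed

lemma Qprob_above_delta_t:
  assumes R: "0 < R" and x: "0 < x" "delta_t R h \<le> x"
  shows "Qprob M G1 G2 R h x = Q_upper (2 powr R) (h\<^sup>2) l x"
proof -
  have s: "1 < (2::real) powr R" using R by simp
  have "h\<^sup>2 / (2 powr R - 1) \<le> 1 + x" using x by (simp add: delta_t_def)
  then have "h\<^sup>2 \<le> (1 + x) * (2 powr R - 1)" using s by (simp add: divide_le_eq)
  then have "h\<^sup>2 / (1 + x) \<le> 2 powr R - 1" using x by (simp add: divide_le_eq mult.commute)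
  then have "max (alpha1 R h x) 0 = alpha1 R h x" by (simp add: alpha1_def)
  moreover note alpha2_eq[OF x(1)]
  moreover have "alpha2 R x - alpha1 R h x = 2 powr R / x + h\<^sup>2 / (1 + x)"
    using x by (simp add: alpha1_def alpha2_def field_simps)
  ultimately show ?thesis by (simp add: Qprob_eq[OF less_imp_le[OF R] x(1)] Q_upper_def)
qed

lemma Qprob_below_delta_t:
  assumes R: "0 < R" and x: "0 < x" "x \<le> delta_t R h"
  shows "Qprob M G1 G2 R h x = erlang2_tail l (alpha2 R x)"
proof -
  have s: "1 < (2::real) powr R" using R by simp
  have "1 + x \<le> h\<^sup>2 / (2 powr R - 1)" using x by (simp add: delta_t_def)
  then have "(1 + x) * (2 powr R - 1) \<le> h\<^sup>2" using s by (simp add: le_divide_eq)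
  then have "2 powr R - 1 \<le> h\<^sup>2 / (1 + x)" using x by (simp add: le_divide_eq mult.commute)
  then have "max (alpha1 R h x) 0 = 0" by (simp add: alpha1_def)
  then show ?thesis using x by (simp add: Qprob_eq[OF less_imp_le[OF R]] erlang2_tail_def)
qed

lemma Qprob_le_max_delta_t:
  assumes R: "0 < R" and x: "0 < x"
  shows "Qprob M G1 G2 R h x \<le> Qprob M G1 G2 R h (max x (delta_t R h))"
proof (cases "x \<le> delta_t R h")
  case True
  have s: "1 < (2::real) powr R" using R by simp
  have t: "0 < delta_t R h" using True x by simp
  have "alpha2 R (delta_t R h) \<le> alpha2 R x"
    using True x s by (simp add: alpha2_eq t frac_le)
  moreover have "0 \<le> alpha2 R (delta_t R h)"
    using t s by (simp add: alpha2_eq)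
  ultimately show ?thesis
    using True x Qprob_below_delta_t[OF R] erlang2_tail_antimono[OF rate_pos] by simp
qed simp

end

theorem mainTheorem10:
  fixes M :: "'a measure" and G1 G2 :: "'a \<Rightarrow> real" and R h lam :: real
  assumes "prob_space M"
    and "R > 0" and "h > 0" and "lam > 0"
    and "distributed M lborel G1 (exponential_density lam)"
    and "distributed M lborel G2 (exponential_density lam)"
    and "prob_space.indep_var M borel G1 borel G2"
  shows "(\<exists>!d. d > 0 \<and> cubic R h lam d = 0) \<and>
         (\<forall>d. d > 0 \<and> cubic R h lam d = 0 \<longrightarrow>
            (let ds = max d (delta_t R h) in
               ds > 0 \<and> (\<forall>\<Delta>>0. Qprob M G1 G2 R h \<Delta> \<le> Qprob M G1 G2 R h ds)))"
proof -
  interpret indep_exponential_pair M G1 G2 lam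
    using assms by (simp add: indep_exponential_pair_def indep_exponential_pair_axioms_def)
  define s H t where "s = (2::real) powr R" and "H = h\<^sup>2" and "t = delta_t R h"
  have s: "0 < s" and H: "0 < H" using \<open>h > 0\<close> by (simp_all add: s_def H_def)
  have "\<exists>!d. 0 < d \<and> cubic R h lam d = 0"
    using optimal_cubic_unique_positive_root[OF s H \<open>lam > 0\<close>]
    by (simp add: cubic_eq_optimal_cubic s_def H_def)
  moreover have "Qprob M G1 G2 R h x \<le> Qprob M G1 G2 R h (max d t)"
    if d: "0 < d" "cubic R h lam d = 0" and x: "0 < x" for d x
  proof -
    have root: "optimal_cubic s H lam d = 0" using d by (simp add: cubic_eq_optimal_cubic s_def H_def)
    have "Qprob M G1 G2 R h x \<le> Qprob M G1 G2 R h (max x t)"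
      using Qprob_le_max_delta_t[OF \<open>R > 0\<close> x] by (simp add: t_def)
    also have "\<dots> = Q_upper s H lam (max x t)"
      using Qprob_above_delta_t[OF \<open>R > 0\<close>, of "max x t"] x by (simp add: s_def H_def t_def)
    also have "\<dots> \<le> Q_upper s H lam (max d t)"
      using Q_upper_le_at_max_root[OF \<open>lam > 0\<close> s H d(1) root, of "max x t" t] x by simp
    also have "\<dots> = Qprob M G1 G2 R h (max d t)"
      using Qprob_above_delta_t[OF \<open>R > 0\<close>, of "max d t"] d by (simp add: s_def H_def t_def)
    finally show ?thesis .
  qed
  moreover have "0 < max d t" if "0 < d" for d using that by simp
  ultimately show ?thesis unfolding Let_def t_def[symmetric] by blast
qed

end
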